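(* There is a constant $c>0$ such that the following holds. Let $k\in\mathbb N$ and let $\Pi$ be a prefix of $k$ temporal operators among $\mathsf X$, $\mathsf F$ and $\mathsf G$. Let $\phi$ be a formula of $\mathsf F(\mathrm{LTL}[\mathsf O])$ and $\psi$ a formula of $\mathrm{LTL}[\mathsf X,\mathsf{wX},\mathsf F,\mathsf G]$ with $\phi\equiv_\omega\psi$. Then the minimal deterministic Büchi automaton for $\mathcal L^\omega(\Pi(\psi))$ has at most $(k+1)\cdot2^{c\cdot\mathrm{size}(\phi)}$ states.
   Context: Let $AP$ be a finite set of atomic propositions and $\Sigma=2^{AP}$. Formulae (negation normal form) are built from literals $p,\neg p$ ($p\in AP$) with $\land,\lor$ and temporal operators $\mathsf X,\mathsf{wX},\mathsf F,\mathsf G,\mathsf O$ (among others). Infinite-trace semantics on $\sigma\in\Sigma^\omega$ at positions $i\in\mathbb N$: literals/Booleans as usual; $\mathsf X\phi$ and $\mathsf{wX}\phi$: $\phi$ holds at $i+1$; $\mathsf F\phi$/$\mathsf G\phi$: $\phi$ at some/every $j\ge i$; $\mathsf O\phi$: $\phi$ at some $0\le j\le i$. $\mathcal L^\omega(\phi)=\{\sigma\in\Sigma^\omega:\sigma,0\models\phi\}$ and $\phi\equiv_\omega\psi$ iff $\mathcal L^\omega(\phi)=\mathcal L^\omega(\psi)$. Size: literals 1, unary operators add 1, binary connectives sum plus 1. $\mathrm{LTL}[S]$: formulae whose temporal operators lie in $S$; $\mathsf F(\mathrm{LTL}[S])$: formulae $\mathsf F(\alpha)$ with $\alpha\in\mathrm{LTL}[S]$.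 $\Pi(\psi)$ denotes the formula obtained by prefixing $\psi$ with the sequence of operators $\Pi$. A deterministic Büchi automaton (DBA) is $(Q,\Sigma,\delta,q_0,F)$ with finite state set $Q$, total transition function $\delta:Q\times\Sigma\to Q$, initial state $q_0$ and accepting set $F\subseteq Q$; it accepts $\sigma\in\Sigma^\omega$ iff its unique run on $\sigma$ visits $F$ infinitely often. The size of a DBA is its number of states. *)

theory Defs
  imports Complex_Main "HOL-Library.Infinite_Set"
begin

datatype ltl =
    Prop nat
  | NProp nat
  | And ltl ltl
  | Or ltl ltl
  | Next ltl
  | WNext ltl
  | Eventually ltl
  | Globally ltl
  | Once ltl

type_synonym trace = "nat \<Rightarrow> nat set"

fun sat :: "trace \<Rightarrow> nat \<Rightarrow> ltl \<Rightarrow> bool" where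
  "sat \<sigma> i (Prop p) = (p \<in> \<sigma> i)"
| "sat \<sigma> i (NProp p) = (p \<notin> \<sigma> i)"
| "sat \<sigma> i (And a b) = (sat \<sigma> i a \<and> sat \<sigma> i b)"
| "sat \<sigma> i (Or a b) = (sat \<sigma> i a \<or> sat \<sigma> i b)"
| "sat \<sigma> i (Next a) = sat \<sigma> (Suc i) a"
| "sat \<sigma> i (WNext a) = sat \<sigma> (Suc i) a"
| "sat \<sigma> i (Eventually a) = (\<exists>j\<ge>i. sat \<sigma> j a)"
| "sat \<sigma> i (Globally a) = (\<forall>j\<ge>i. sat \<sigma> j a)"
| "sat \<sigma> i (Once a) = (\<exists>j\<le>i. sat \<sigma> j a)"

fun atoms :: "ltl \<Rightarrow> nat set" where
  "atoms (Prop p) = {p}"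
| "atoms (NProp p) = {p}"
| "atoms (And a b) = atoms a \<union> atoms b"
| "atoms (Or a b) = atoms a \<union> atoms b"
| "atoms (Next a) = atoms a"
| "atoms (WNext a) = atoms a"
| "atoms (Eventually a) = atoms a"
| "atoms (Globally a) = atoms a"
| "atoms (Once a) = atoms a"

fun fsize :: "ltl \<Rightarrow> nat" where
  "fsize (Prop p) = 1"
| "fsize (NProp p) = 1"
| "fsize (And a b) = fsize a + fsize b + 1"
| "fsize (Or a b) = fsize a + fsize b + 1"
| "fsize (Next a) = fsize a + 1"
| "fsize (WNext a) = fsize a + 1"
| "fsize (Eventually a) = fsize a + 1"
| "fsize (Globally a) = fsize a + 1"
| "fsize (Once a) = fsize a + 1"

definition traces :: "nat set \<Rightarrow> trace set" where
  "traces AP = {\<sigma>. \<forall>i. \<sigma> i \<subseteq> AP}"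

definition lang_omega :: "nat set \<Rightarrow> ltl \<Rightarrow> trace set" where
  "lang_omega AP \<phi> = {\<sigma> \<in> traces AP. sat \<sigma> 0 \<phi>}"

definition equiv_omega :: "nat set \<Rightarrow> ltl \<Rightarrow> ltl \<Rightarrow> bool" where
  "equiv_omega AP \<phi> \<psi> \<longleftrightarrow> lang_omega AP \<phi> = lang_omega AP \<psi>"

datatype top = TX | TwX | TF | TG | TO

fun tops :: "ltl \<Rightarrow> top set" where
  "tops (Prop p) = {}"
| "tops (NProp p) = {}"
| "tops (And a b) = tops a \<union> tops b"
| "tops (Or a b) = tops a \<union> tops b"
| "tops (Next a) = insert TX (tops a)"
| "tops (WNext a) = insert TwX (tops a)"
| "tops (Eventually a) = insert TF (tops a)"
| "tops (Globally a) = insert TG (tops a)"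
| "tops (Once a) = insert TO (tops a)"

definition in_LTL :: "top set \<Rightarrow> ltl \<Rightarrow> bool" where
  "in_LTL S \<phi> \<longleftrightarrow> tops \<phi> \<subseteq> S"

definition in_F_LTL :: "top set \<Rightarrow> ltl \<Rightarrow> bool" where
  "in_F_LTL S \<phi> \<longleftrightarrow> (\<exists>\<alpha>. \<phi> = Eventually \<alpha> \<and> in_LTL S \<alpha>)"

datatype pop = PX | PF | PG

fun apply_pop :: "pop \<Rightarrow> ltl \<Rightarrow> ltl" where
  "apply_pop PX a = Next a"
| "apply_pop PF a = Eventually a"
| "apply_pop PG a = Globally a"

definition apply_prefix :: "pop list \<Rightarrow> ltl \<Rightarrow> ltl" where
  "apply_prefix \<Pi> \<psi> = foldr apply_pop \<Pi> \<psi>"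

record dba =
  states :: "nat set"
  delta :: "nat \<Rightarrow> nat set \<Rightarrow> nat"
  init :: nat
  acc :: "nat set"

definition wf_dba :: "nat set \<Rightarrow> dba \<Rightarrow> bool" where
  "wf_dba AP A \<longleftrightarrow> finite (states A) \<and> init A \<in> states A \<and> acc A \<subseteq> states A
     \<and> (\<forall>q\<in>states A. \<forall>a. a \<subseteq> AP \<longrightarrow> delta A q a \<in> states A)"

fun run :: "dba \<Rightarrow> trace \<Rightarrow> nat \<Rightarrow> nat" where
  "run A w 0 = init A"
| "run A w (Suc n) = delta A (run A w n) (w n)"

definition dba_lang :: "nat set \<Rightarrow> dba \<Rightarrow> trace set" where
  "dba_lang AP A = {w \<in> traces AP. \<exists>\<^sub>\<infinity>n. run A w n \<in> acc A}"

definition min_dba_at_most :: "nat set \<Rightarrow> trace set \<Rightarrow> nat \<Rightarrow> bool" where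
  "min_dba_at_most AP L N \<longleftrightarrow>
     (\<exists>A. wf_dba AP A \<and> dba_lang AP A = L \<and> card (states A) \<le> N)"

end

theory Submission
  imports Defs "HOL-Library.Omega_Words_Fun"
begin

text \<open>
Write \<open>\<phi> = F \<alpha>\<close> with \<open>\<alpha>\<close> a pure-past formula. As \<open>\<psi>\<close> is a pure-future formula
equivalent to \<open>\<phi>\<close>, it holds at position \<open>i\<close> of a trace iff \<open>\<alpha>\<close> holds somewhere on the
suffix starting at \<open>i\<close>. Since \<open>\<alpha>\<close> only looks into the past, this property is antitone
in \<open>i\<close>; consequently \<open>\<Pi>(\<psi>)\<close> says either that \<open>F \<alpha>\<close> holds on every suffix (if \<open>\<Pi>\<close>
contains \<open>G\<close>) or that \<open>F \<alpha>\<close> holds on the suffix starting at \<open>n\<close>, the number of \<open>X\<close>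
in \<open>\<Pi>\<close>.

A past formula is evaluated deterministically by remembering which of its subformulas
held at the previous position, which takes at most \<open>2^|\<alpha>|\<close> states. \<open>F \<alpha>\<close> on the
suffix starting at \<open>n\<close> is recognised by waiting \<open>n\<close> steps and then running this monitor
with a sticky flag; \<open>F \<alpha>\<close> on every suffix is recognised by restarting the monitor
whenever \<open>\<alpha>\<close> is seen and accepting at the restarts. Both automata have at most
\<open>k + 2^(|\<alpha>|+1) \<le> (k+1) 2^|\<phi>|\<close> states, so \<open>c = 1\<close> works.
\<close>

section \<open>Deterministic Buechi automata over arbitrary state types\<close>

fun drun :: "('q \<Rightarrow> nat set \<Rightarrow> 'q) \<Rightarrow> 'q \<Rightarrow> trace \<Rightarrow> nat \<Rightarrow> 'q" where
  "drun d q w 0 = q"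
| "drun d q w (Suc n) = d (drun d q w n) (w n)"

lemma drun_add: "drun d q w (m + n) = drun d (drun d q w m) (suffix m w) n"
  by (induction n) simp_all

lemma drun_Suc_shift: "drun d q w (Suc n) = drun d (d q (w 0)) (suffix 1 w) n"
  by (induction n) simp_all

lemma drun_in:
  assumes "q \<in> Q" "\<And>q a. q \<in> Q \<Longrightarrow> a \<subseteq> AP \<Longrightarrow> d q a \<in> Q" "w \<in> traces AP"
  shows "drun d q w n \<in> Q"
  using assms by (induction n) (auto simp: traces_def)

lemma run_eq_drun: "run A w n = drun (delta A) (init A) w n"
  by (induction n) simp_all

lemma suffix_in_traces: "w \<in> traces AP \<Longrightarrow> suffix n w \<in> traces AP"
  by (simp add: traces_def)

lemma INFM_nat_shift: "(\<exists>\<^sub>\<infinity>t. P (t + k)) \<longleftrightarrow> (\<exists>\<^sub>\<infinity>t::nat. P t)"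
  using eventually_sequentially_seg[of "\<lambda>t. \<not> P t" k]
  by (simp add: frequently_def cofinite_eq_sequentially)

lemma min_dba_at_most_mono: "min_dba_at_most AP L N \<Longrightarrow> N \<le> M \<Longrightarrow> min_dba_at_most AP L M"
  unfolding min_dba_at_most_def by fastforce

lemma min_dba_at_most_by_automaton:
  fixes d :: "'q \<Rightarrow> nat set \<Rightarrow> 'q"
  assumes fin: "finite Q" and start: "start \<in> Q"
    and closed: "\<And>q a. q \<in> Q \<Longrightarrow> a \<subseteq> AP \<Longrightarrow> d q a \<in> Q"
    and lang: "L \<subseteq> traces AP" "\<And>w. w \<in> traces AP \<Longrightarrow> w \<in> L \<longleftrightarrow> (\<exists>\<^sub>\<infinity>n. Acc (drun d start w n))"
  shows "min_dba_at_most AP L (card Q)"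
proof -
  obtain f :: "'q \<Rightarrow> nat" where inj: "inj_on f Q"
    using fin finite_imp_inj_to_nat_seg by blast
  define A where "A = \<lparr>states = f ` Q, delta = (\<lambda>n a. f (d (inv_into Q f n) a)),
    init = f start, acc = f ` {q \<in> Q. Acc q}\<rparr>"
  have "run A w n = f (drun d start w n)" if "w \<in> traces AP" for w n
    using drun_in[OF start closed that] inj by (induction n) (auto simp: A_def)
  then have accepting: "run A w n \<in> acc A \<longleftrightarrow> Acc (drun d start w n)" if "w \<in> traces AP" for w n
    using drun_in[OF start closed that] inj that by (auto simp: A_def inj_on_image_mem_iff)
  have "wf_dba AP A"
    unfolding wf_dba_def A_def using fin start closed inj by auto
  moreover have "dba_lang AP A = L"
    using accepting lang by (auto simp: dba_lang_def)
  moreover have "card (states A) \<le> card Q"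
    by (simp add: A_def card_image_le fin)
  ultimately show ?thesis
    unfolding min_dba_at_most_def by blast
qed

text \<open>\<open>Inl c\<close> means that \<open>c + 1\<close> letters are still to be skipped before the delayed
automaton starts.\<close>

definition delay_state :: "'q \<Rightarrow> nat \<Rightarrow> nat + 'q" where
  "delay_state q n = (case n of 0 \<Rightarrow> Inr q | Suc c \<Rightarrow> Inl c)"

definition delay_step :: "'q \<Rightarrow> ('q \<Rightarrow> nat set \<Rightarrow> 'q) \<Rightarrow> nat + 'q \<Rightarrow> nat set \<Rightarrow> nat + 'q" where
  "delay_step q d s a = (case s of Inl c \<Rightarrow> delay_state q c | Inr p \<Rightarrow> Inr (d p a))"

lemma drun_delay_step:
  "drun (delay_step q d) (delay_state q n) w (n + t) = Inr (drun d q (suffix n w) t)"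
proof -
  have waited: "drun (delay_step q d) (delay_state q m) v m = Inr q" for m v
  proof (induction m arbitrary: v)
    case (Suc m)
    have "drun (delay_step q d) (delay_state q (Suc m)) v (Suc m) =
        drun (delay_step q d) (delay_state q m) (suffix 1 v) m"
      by (simp only: drun_Suc_shift) (simp add: delay_step_def delay_state_def)
    then show ?case
      using Suc.IH by simp
  qed (simp add: delay_state_def)
  have "drun (delay_step q d) (Inr p) v t = Inr (drun d p v t)" for p v
    by (induction t) (simp_all add: delay_step_def)
  then show ?thesis
    by (simp add: drun_add waited)
qed

lemma min_dba_at_most_suffix:
  assumes "min_dba_at_most AP L N"
  shows "min_dba_at_most AP {w \<in> traces AP. suffix n w \<in> L} (n + N)"
proof -
  obtain A where A: "wf_dba AP A" "dba_lang AP A = L" "card (states A) \<le> N"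
    using assms unfolding min_dba_at_most_def by blast
  let ?d = "delay_step (init A) (delta A)" and ?start = "delay_state (init A) n"
  let ?Q = "Inl ` {..<n} \<union> Inr ` states A"
  have fin: "finite ?Q" and start: "?start \<in> ?Q"
    using A(1) by (auto simp: wf_dba_def delay_state_def split: nat.split)
  have closed: "?d s a \<in> ?Q" if "s \<in> ?Q" "a \<subseteq> AP" for s a
    using that A(1) by (auto simp: delay_step_def delay_state_def wf_dba_def split: nat.split)
  have "card ?Q \<le> n + N"
    using card_Un_le[of "Inl ` {..<n}" "Inr ` states A"] A(3)
      card_image_le[of "{..<n}" Inl] card_image_le[of "states A" Inr] A(1)
    by (simp add: card_image wf_dba_def)
  moreover have "min_dba_at_most AP {w \<in> traces AP. suffix n w \<in> L} (card ?Q)"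
  proof (rule min_dba_at_most_by_automaton[OF fin start closed,
        where Acc = "case_sum (\<lambda>_. False) (\<lambda>q. q \<in> acc A)"])
    fix w
    assume w: "w \<in> traces AP"
    have "suffix n w \<in> L \<longleftrightarrow> (\<exists>\<^sub>\<infinity>t. run A (suffix n w) t \<in> acc A)"
      using A(2) suffix_in_traces[OF w] by (auto simp: dba_lang_def)
    also have "\<dots> \<longleftrightarrow> (\<exists>\<^sub>\<infinity>t. case_sum (\<lambda>_. False) (\<lambda>q. q \<in> acc A) (drun ?d ?start w (t + n)))"
      by (simp add: drun_delay_step run_eq_drun add.commute[of _ n])
    also have "\<dots> \<longleftrightarrow> (\<exists>\<^sub>\<infinity>m. case_sum (\<lambda>_. False) (\<lambda>q. q \<in> acc A) (drun ?d ?start w m))"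
      by (rule INFM_nat_shift)
    finally show "w \<in> {w \<in> traces AP. suffix n w \<in> L} \<longleftrightarrow> \<dots>"
      using w by simp
  qed auto
  ultimately show ?thesis
    by (rule min_dba_at_most_mono[rotated])
qed

section \<open>Pure-future and pure-past formulas on suffixes\<close>

lemma ex_ge_add_shift: "(\<exists>j\<ge>k + i. P j) \<longleftrightarrow> (\<exists>j\<ge>i. P (k + j :: nat))"
proof
  assume "\<exists>j\<ge>k + i. P j"
  then obtain j where "j \<ge> k + i" "P j"
    by blast
  then show "\<exists>j\<ge>i. P (k + j)"
    by (intro exI[of _ "j - k"]) auto
next
  assume "\<exists>j\<ge>i. P (k + j)"
  then obtain j where "j \<ge> i" "P (k + j)"
    by blast
  then show "\<exists>j\<ge>k + i. P j"
    by (intro exI[of _ "k + j"]) auto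
qed

lemma all_ge_add_shift: "(\<forall>j\<ge>k + i. P j) \<longleftrightarrow> (\<forall>j\<ge>i. P (k + j :: nat))"
  using ex_ge_add_shift[of k i "\<lambda>j. \<not> P j"] by blast

lemma sat_future_suffix:
  assumes "tops \<psi> \<subseteq> {TX, TwX, TF, TG}"
  shows "sat w (k + i) \<psi> \<longleftrightarrow> sat (suffix k w) i \<psi>"
  using assms
proof (induction \<psi> arbitrary: i)
  case (Eventually a)
  then show ?case
    by (simp add: ex_ge_add_shift)
next
  case (Globally a)
  then show ?case
    by (simp add: all_ge_add_shift)
next
  case (Next a)
  then show ?case
    using Next.IH[of "Suc i"] by simp
next
  case (WNext a)
  then show ?case
    using WNext.IH[of "Suc i"] by simp
qed auto

lemma sat_past_suffix:
  assumes "tops \<alpha> \<subseteq> {TO}" "sat (suffix k w) i \<alpha>"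
  shows "sat w (k + i) \<alpha>"
  using assms
proof (induction \<alpha> arbitrary: i)
  case (Once b)
  then obtain j where "j \<le> i" "sat w (k + j) b"
    by auto
  then show ?case
    by (auto intro!: exI[of _ "k + j"])
qed auto

lemma antimono_eventually_past_suffix:
  assumes "tops \<alpha> \<subseteq> {TO}"
  shows "antimono (\<lambda>j. \<exists>m. sat (suffix j w) m \<alpha>)"
proof (rule antimonoI, rule le_boolI)
  fix j j' :: nat
  assume "j \<le> j'" and "\<exists>m. sat (suffix j' w) m \<alpha>"
  then obtain m where "sat (suffix (j' - j) (suffix j w)) m \<alpha>"
    by auto
  then show "\<exists>m. sat (suffix j w) m \<alpha>"
    using sat_past_suffix[OF assms] by blast
qed

lemma apply_prefix_simps [simp]:
  "apply_prefix [] \<psi> = \<psi>"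
  "apply_prefix (p # \<Pi>) \<psi> = apply_pop p (apply_prefix \<Pi> \<psi>)"
  by (simp_all add: apply_prefix_def)

lemma sat_apply_prefix:
  assumes anti: "antimono P" and base: "\<And>i. sat \<sigma> i \<psi> \<longleftrightarrow> P i"
  shows "sat \<sigma> i (apply_prefix \<Pi> \<psi>) \<longleftrightarrow>
    (if PG \<in> set \<Pi> then \<forall>j. P j else P (i + count_list \<Pi> PX))"
proof (induction \<Pi> arbitrary: i)
  case Nil
  then show ?case
    by (simp add: base)
next
  case (Cons p \<Pi>)
  have down: "P j" if "P j'" "j \<le> j'" for j j'
    using le_boolD[OF antimonoD[OF anti \<open>j \<le> j'\<close>]] that(1) by blast
  show ?case
  proof (cases p)
    case PX
    then show ?thesis
      using Cons by simp
  next
    case PF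
    have "(\<exists>j\<ge>i. P (j + c)) \<longleftrightarrow> P (i + c)" for c
      using down by auto
    then show ?thesis
      using Cons PF by auto
  next
    case PG
    have "(\<forall>j\<ge>i. P (j + c)) \<longleftrightarrow> (\<forall>j. P j)" for c
    proof
      assume later: "\<forall>j\<ge>i. P (j + c)"
      show "\<forall>j. P j"
      proof
        fix j
        have "P (max i j + c)"
          using later by simp
        then show "P j"
          by (rule down) simp
      qed
    qed simp
    then show ?thesis
      using Cons PG by auto
  qed
qed

lemma lang_omega_apply_prefix:
  assumes past: "tops \<alpha> \<subseteq> {TO}" and future: "tops \<psi> \<subseteq> {TX, TwX, TF, TG}"
    and equiv: "equiv_omega AP (Eventually \<alpha>) \<psi>"
  shows "lang_omega AP (apply_prefix \<Pi> \<psi>) =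
    (if PG \<in> set \<Pi> then {w \<in> traces AP. \<forall>j. \<exists>m. sat (suffix j w) m \<alpha>}
     else {w \<in> traces AP. \<exists>m. sat (suffix (count_list \<Pi> PX) w) m \<alpha>})"
proof -
  have "sat w i \<psi> \<longleftrightarrow> (\<exists>m. sat (suffix i w) m \<alpha>)" if w: "w \<in> traces AP" for w i
  proof -
    have "sat w i \<psi> \<longleftrightarrow> suffix i w \<in> lang_omega AP \<psi>"
      using sat_future_suffix[OF future, of w i 0] suffix_in_traces[OF w] by (simp add: lang_omega_def)
    also have "\<dots> \<longleftrightarrow> suffix i w \<in> lang_omega AP (Eventually \<alpha>)"
      using equiv by (simp add: equiv_omega_def)
    finally show ?thesis
      using suffix_in_traces[OF w] by (simp add: lang_omega_def)
  qed
  then have "sat w 0 (apply_prefix \<Pi> \<psi>) \<longleftrightarrow>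
      (if PG \<in> set \<Pi> then \<forall>j. \<exists>m. sat (suffix j w) m \<alpha> else \<exists>m. sat (suffix (count_list \<Pi> PX) w) m \<alpha>)"
    if "w \<in> traces AP" for w
    using sat_apply_prefix[OF antimono_eventually_past_suffix[OF past]] that by simp
  then show ?thesis
    by (auto simp: lang_omega_def)
qed

section \<open>A deterministic monitor for past formulas\<close>

fun subformulas :: "ltl \<Rightarrow> ltl set" where
  "subformulas (Prop p) = {Prop p}"
| "subformulas (NProp p) = {NProp p}"
| "subformulas (And a b) = insert (And a b) (subformulas a \<union> subformulas b)"
| "subformulas (Or a b) = insert (Or a b) (subformulas a \<union> subformulas b)"
| "subformulas (Next a) = insert (Next a) (subformulas a)"
| "subformulas (WNext a) = insert (WNext a) (subformulas a)"
| "subformulas (Eventually a) = insert (Eventually a) (subformulas a)"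
| "subformulas (Globally a) = insert (Globally a) (subformulas a)"
| "subformulas (Once a) = insert (Once a) (subformulas a)"

lemma subformulas_self [simp]: "a \<in> subformulas a"
  by (cases a) auto

lemma finite_subformulas [simp]: "finite (subformulas a)"
  by (induction a) auto

lemma subformulas_trans: "b \<in> subformulas a \<Longrightarrow> subformulas b \<subseteq> subformulas a"
  by (induction a) auto

lemma tops_subformula: "b \<in> subformulas a \<Longrightarrow> tops b \<subseteq> tops a"
  by (induction a) auto

lemma card_subformulas_le: "card (subformulas a) \<le> fsize a"
proof (induction a)
  case (And a b)
  then show ?case
    using card_Un_le[of "subformulas a" "subformulas b"] by (simp add: card_insert_if)
next
  case (Or a b)
  then show ?case
    using card_Un_le[of "subformulas a" "subformulas b"] by (simp add: card_insert_if)
qed (simp_all add: card_insert_if)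

text \<open>\<open>sat_now S a b\<close> evaluates the past formula \<open>b\<close> at the current position, given the
current letter \<open>a\<close> and the set \<open>S\<close> of subformulas that held at the previous position.\<close>

fun sat_now :: "ltl set \<Rightarrow> nat set \<Rightarrow> ltl \<Rightarrow> bool" where
  "sat_now S a (Prop p) = (p \<in> a)"
| "sat_now S a (NProp p) = (p \<notin> a)"
| "sat_now S a (And x y) = (sat_now S a x \<and> sat_now S a y)"
| "sat_now S a (Or x y) = (sat_now S a x \<or> sat_now S a y)"
| "sat_now S a (Once x) = (Once x \<in> S \<or> sat_now S a x)"
| "sat_now S a _ = False"

definition monitor_step :: "ltl \<Rightarrow> ltl set \<Rightarrow> nat set \<Rightarrow> ltl set" where
  "monitor_step \<alpha> S a = {b \<in> subformulas \<alpha>. sat_now S a b}"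

fun past_state :: "ltl \<Rightarrow> trace \<Rightarrow> nat \<Rightarrow> ltl set" where
  "past_state \<alpha> w 0 = {}"
| "past_state \<alpha> w (Suc i) = {b \<in> subformulas \<alpha>. sat w i b}"

lemma sat_now_past_state:
  assumes "subformulas b \<subseteq> subformulas \<alpha>" "tops b \<subseteq> {TO}"
  shows "sat_now (past_state \<alpha> w i) (w i) b \<longleftrightarrow> sat w i b"
  using assms
proof (induction b)
  case (Once c)
  then have IH: "sat_now (past_state \<alpha> w i) (w i) c \<longleftrightarrow> sat w i c"
    by auto
  show ?case
  proof (cases i)
    case (Suc i')
    have "Once c \<in> past_state \<alpha> w i \<longleftrightarrow> (\<exists>j\<le>i'. sat w j c)"
      using Once.prems Suc by auto
    then show ?thesis
      using IH Suc by (auto simp: le_Suc_eq)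
  qed (use IH in simp)
qed auto

lemma monitor_step_past_state:
  assumes "tops \<alpha> \<subseteq> {TO}"
  shows "monitor_step \<alpha> (past_state \<alpha> w i) (w i) = past_state \<alpha> w (Suc i)"
proof -
  have "sat_now (past_state \<alpha> w i) (w i) b \<longleftrightarrow> sat w i b" if "b \<in> subformulas \<alpha>" for b
    using sat_now_past_state[OF subformulas_trans[OF that]] tops_subformula[OF that] assms by blast
  then show ?thesis
    unfolding monitor_step_def by auto
qed

lemma card_monitor_states: "card (Pow (subformulas \<alpha>) \<times> (UNIV :: bool set)) \<le> 2 ^ Suc (fsize \<alpha>)"
proof -
  have "card (Pow (subformulas \<alpha>) \<times> (UNIV :: bool set)) = 2 * 2 ^ card (subformulas \<alpha>)"
    by (simp add: card_cartesian_product card_Pow)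
  also have "\<dots> \<le> 2 * 2 ^ fsize \<alpha>"
    using card_subformulas_le[of \<alpha>] by simp
  finally show ?thesis
    by simp
qed

section \<open>Automata for eventually and always-eventually a past formula\<close>

definition eventually_step :: "ltl \<Rightarrow> ltl set \<times> bool \<Rightarrow> nat set \<Rightarrow> ltl set \<times> bool" where
  "eventually_step \<alpha> q a = (let S = monitor_step \<alpha> (fst q) a in (S, snd q \<or> \<alpha> \<in> S))"

lemma drun_eventually_step:
  assumes "tops \<alpha> \<subseteq> {TO}"
  shows "drun (eventually_step \<alpha>) ({}, False) w t = (past_state \<alpha> w t, \<exists>i<t. sat w i \<alpha>)"
  by (induction t) (auto simp: eventually_step_def monitor_step_past_state[OF assms] less_Suc_eq)

lemma min_dba_eventually_past:
  assumes "tops \<alpha> \<subseteq> {TO}"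
  shows "min_dba_at_most AP {w \<in> traces AP. \<exists>m. sat w m \<alpha>} (2 ^ Suc (fsize \<alpha>))"
proof (rule min_dba_at_most_mono[OF _ card_monitor_states])
  show "min_dba_at_most AP {w \<in> traces AP. \<exists>m. sat w m \<alpha>}
      (card (Pow (subformulas \<alpha>) \<times> (UNIV :: bool set)))"
  proof (rule min_dba_at_most_by_automaton[where d = "eventually_step \<alpha>" and start = "({}, False)"
        and Acc = snd])
    fix w
    assume "w \<in> traces AP"
    have "(\<exists>\<^sub>\<infinity>t. \<exists>i<t. sat w i \<alpha>) \<longleftrightarrow> (\<exists>m. sat w m \<alpha>)"
    proof
      assume "\<exists>m. sat w m \<alpha>"
      then have "\<forall>\<^sub>\<infinity>t. \<exists>i<t. sat w i \<alpha>"
        by (auto simp: MOST_nat)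
      then show "\<exists>\<^sub>\<infinity>t. \<exists>i<t. sat w i \<alpha>"
        by (simp add: MOST_INFM)
    qed (auto dest: INFM_EX)
    then show "w \<in> {w \<in> traces AP. \<exists>m. sat w m \<alpha>} \<longleftrightarrow>
        (\<exists>\<^sub>\<infinity>t. snd (drun (eventually_step \<alpha>) ({}, False) w t))"
      using \<open>w \<in> traces AP\<close> by (simp add: drun_eventually_step[OF assms])
  next
    show "eventually_step \<alpha> q a \<in> Pow (subformulas \<alpha>) \<times> UNIV" for q a
      by (simp add: eventually_step_def monitor_step_def Let_def)
  qed simp_all
qed

lemma min_dba_eventually_past_suffix:
  assumes "tops \<alpha> \<subseteq> {TO}"
  shows "min_dba_at_most AP {w \<in> traces AP. \<exists>m. sat (suffix n w) m \<alpha>} (n + 2 ^ Suc (fsize \<alpha>))"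
proof -
  have "{w \<in> traces AP. \<exists>m. sat (suffix n w) m \<alpha>} =
      {w \<in> traces AP. suffix n w \<in> {v \<in> traces AP. \<exists>m. sat v m \<alpha>}}"
    using suffix_in_traces by blast
  then show ?thesis
    using min_dba_at_most_suffix[OF min_dba_eventually_past[OF assms]] by simp
qed

definition reset_step :: "ltl \<Rightarrow> ltl set \<times> bool \<Rightarrow> nat set \<Rightarrow> ltl set \<times> bool" where
  "reset_step \<alpha> q a =
    (let S = monitor_step \<alpha> (fst q) a in if \<alpha> \<in> S then ({}, True) else (S, False))"

lemma drun_reset_step_segment:
  assumes past: "tops \<alpha> \<subseteq> {TO}" and reset: "fst (drun (reset_step \<alpha>) q w j) = {}"
    and before: "\<forall>i<m. \<not> sat (suffix j w) i \<alpha>"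
  shows "drun (reset_step \<alpha>) q w (j + Suc m) =
    (if sat (suffix j w) m \<alpha> then ({}, True) else (past_state \<alpha> (suffix j w) (Suc m), False))"
proof -
  define v where "v = suffix j w"
  have step: "drun (reset_step \<alpha>) q w (j + Suc i) =
      (if sat v i \<alpha> then ({}, True) else (past_state \<alpha> v (Suc i), False))"
    if "fst (drun (reset_step \<alpha>) q w (j + i)) = past_state \<alpha> v i" for i
    using that monitor_step_past_state[OF past, of v i] by (simp add: reset_step_def v_def)
  have "fst (drun (reset_step \<alpha>) q w (j + m)) = past_state \<alpha> v m"
    using before unfolding v_def[symmetric]
  proof (induction m)
    case (Suc m)
    then show ?case
      using step[of m] by simp
  qed (simp add: reset)
  then show ?thesis
    using step[of m] by (simp add: v_def)
qed

lemma drun_reset_step_restart: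
  assumes past: "tops \<alpha> \<subseteq> {TO}" and reset: "fst (drun (reset_step \<alpha>) q w j) = {}"
  shows "(\<exists>m. sat (suffix j w) m \<alpha>) \<longleftrightarrow> (\<exists>t>j. snd (drun (reset_step \<alpha>) q w t))"
proof
  assume "\<exists>m. sat (suffix j w) m \<alpha>"
  then obtain m where "sat (suffix j w) m \<alpha>" "\<forall>i<m. \<not> sat (suffix j w) i \<alpha>"
    by (auto simp: exists_least_iff[of "\<lambda>m. sat (suffix j w) m \<alpha>"])
  then have "snd (drun (reset_step \<alpha>) q w (j + Suc m))"
    using drun_reset_step_segment[OF past reset] by simp
  then show "\<exists>t>j. snd (drun (reset_step \<alpha>) q w t)"
    by (intro exI[of _ "j + Suc m"]) simp
next
  assume "\<exists>t>j. snd (drun (reset_step \<alpha>) q w t)"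
  then obtain m where accepting: "snd (drun (reset_step \<alpha>) q w (j + Suc m))"
    by (auto simp: less_iff_Suc_add)
  show "\<exists>m. sat (suffix j w) m \<alpha>"
  proof (rule ccontr)
    assume "\<nexists>m. sat (suffix j w) m \<alpha>"
    then show False
      using accepting drun_reset_step_segment[OF past reset, of m] by (simp del: drun.simps)
  qed
qed

lemma drun_reset_step_accepting_imp_reset:
  "snd (drun (reset_step \<alpha>) ({}, False) w t) \<Longrightarrow> fst (drun (reset_step \<alpha>) ({}, False) w t) = {}"
  by (cases t) (auto simp: reset_step_def Let_def)

lemma drun_reset_step_INFM_iff:
  assumes past: "tops \<alpha> \<subseteq> {TO}"
  shows "(\<exists>\<^sub>\<infinity>t. snd (drun (reset_step \<alpha>) ({}, False) w t)) \<longleftrightarrow> (\<forall>j. \<exists>m. sat (suffix j w) m \<alpha>)"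
    (is "(\<exists>\<^sub>\<infinity>t. ?acc t) \<longleftrightarrow> _")
proof
  assume "\<exists>\<^sub>\<infinity>t. ?acc t"
  show "\<forall>j. \<exists>m. sat (suffix j w) m \<alpha>"
  proof
    fix j
    obtain t where "t > j" "?acc t" "\<exists>t'>t. ?acc t'"
      using \<open>\<exists>\<^sub>\<infinity>t. ?acc t\<close> unfolding INFM_nat by blast
    then have "\<exists>m. sat (suffix t w) m \<alpha>"
      using drun_reset_step_restart[OF past drun_reset_step_accepting_imp_reset] by blast
    then show "\<exists>m. sat (suffix j w) m \<alpha>"
      using antimonoD[OF antimono_eventually_past_suffix[OF past], of j t] \<open>t > j\<close> by auto
  qed
next
  assume all: "\<forall>j. \<exists>m. sat (suffix j w) m \<alpha>"
  have "\<exists>t>n. ?acc t" for n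
  proof (induction n)
    case 0
    show ?case
      using drun_reset_step_restart[OF past, of "({}, False)" w 0] all[rule_format, of 0] by simp
  next
    case (Suc n)
    then obtain t where "t > n" "?acc t"
      by blast
    then have "\<exists>t'>t. ?acc t'"
      using drun_reset_step_restart[OF past drun_reset_step_accepting_imp_reset] all by blast
    then show ?case
      using \<open>t > n\<close> by (meson Suc_leI le_less_trans)
  qed
  then show "\<exists>\<^sub>\<infinity>t. ?acc t"
    by (simp add: INFM_nat)
qed

lemma min_dba_always_eventually_past:
  assumes past: "tops \<alpha> \<subseteq> {TO}"
  shows "min_dba_at_most AP {w \<in> traces AP. \<forall>j. \<exists>m. sat (suffix j w) m \<alpha>} (2 ^ Suc (fsize \<alpha>))"
proof (rule min_dba_at_most_mono[OF _ card_monitor_states])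
  show "min_dba_at_most AP {w \<in> traces AP. \<forall>j. \<exists>m. sat (suffix j w) m \<alpha>}
      (card (Pow (subformulas \<alpha>) \<times> (UNIV :: bool set)))"
  proof (rule min_dba_at_most_by_automaton[where d = "reset_step \<alpha>" and start = "({}, False)"
        and Acc = snd])
    show "reset_step \<alpha> q a \<in> Pow (subformulas \<alpha>) \<times> UNIV" for q a
      by (simp add: reset_step_def monitor_step_def Let_def)
  qed (simp_all add: drun_reset_step_INFM_iff[OF past])
qed

theorem theorem4:
  shows "\<exists>c::real. c > 0 \<and>
    (\<forall>AP k \<Pi> \<phi> \<psi>. finite AP \<longrightarrow> length \<Pi> = k \<longrightarrow>
       atoms \<phi> \<subseteq> AP \<longrightarrow> atoms \<psi> \<subseteq> AP \<longrightarrow>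
       in_F_LTL {TO} \<phi> \<longrightarrow> in_LTL {TX, TwX, TF, TG} \<psi> \<longrightarrow>
       equiv_omega AP \<phi> \<psi> \<longrightarrow>
       min_dba_at_most AP (lang_omega AP (apply_prefix \<Pi> \<psi>))
         (nat \<lfloor>(real k + 1) * 2 powr (c * real (fsize \<phi>))\<rfloor>))"
proof (intro exI[of _ 1] conjI allI impI)
  fix AP :: "nat set" and k :: nat and \<Pi> :: "pop list" and \<phi> \<psi> :: ltl
  assume "length \<Pi> = k" "in_F_LTL {TO} \<phi>" "in_LTL {TX, TwX, TF, TG} \<psi>" "equiv_omega AP \<phi> \<psi>"
  then obtain \<alpha> where \<phi>: "\<phi> = Eventually \<alpha>" and past: "tops \<alpha> \<subseteq> {TO}"
    and future: "tops \<psi> \<subseteq> {TX, TwX, TF, TG}" and equiv: "equiv_omega AP (Eventually \<alpha>) \<psi>"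
    by (auto simp: in_F_LTL_def in_LTL_def)
  have "(real k + 1) * 2 powr (1 * real (fsize \<phi>)) = real ((k + 1) * 2 ^ fsize \<phi>)"
    by (simp add: powr_realpow distrib_right)
  then have bound: "nat \<lfloor>(real k + 1) * 2 powr (1 * real (fsize \<phi>))\<rfloor> = (k + 1) * 2 ^ fsize \<phi>"
    by (simp only: floor_of_nat nat_int)
  have "count_list \<Pi> PX \<le> k * 2 ^ Suc (fsize \<alpha>)"
    using order_trans[OF count_le_length[of \<Pi> PX]] \<open>length \<Pi> = k\<close> by simp
  then have "count_list \<Pi> PX + 2 ^ Suc (fsize \<alpha>) \<le> (k + 1) * 2 ^ Suc (fsize \<alpha>)"
    by simp
  then show "min_dba_at_most AP (lang_omega AP (apply_prefix \<Pi> \<psi>))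
      (nat \<lfloor>(real k + 1) * 2 powr (1 * real (fsize \<phi>))\<rfloor>)"
    unfolding bound lang_omega_apply_prefix[OF past future equiv]
    using min_dba_at_most_mono[OF min_dba_always_eventually_past[OF past]]
      min_dba_at_most_mono[OF min_dba_eventually_past_suffix[OF past]]
    by (simp add: \<phi>)
qed simp

end
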